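(* Let $K$ be an infinite commutative domain and $R$ a unital associative $K$-algebra on which $K$ acts torsion-freely. Suppose $(R,\cdot)$ satisfies a semigroup identity $u=v$, and write $u=au'b$, $v=av'b$ with $a,b$ (possibly empty) words and $u',v'$ words such that $u'=v'$ is reduced. Then $(R,\cdot)$ satisfies $u'=v'$.
   Context: A semigroup identity $u=v$ ($u\neq v$ words in the free semigroup on variables $x_1,x_2,\dots$) holds in a semigroup if both sides agree under every substitution. The identity $u'=v'$ is reduced if the first letters of $u'$ and $v'$ differ and the last letters of $u'$ and $v'$ differ. *)

theory Defs
  imports Main
begin

text \<open>Words in the free semigroup on variables x_1, x_2, ... are nonempty lists of
variable indices.\<close>

definition word_eval :: "(nat \<Rightarrow> 'r::monoid_mult) \<Rightarrow> nat list \<Rightarrow> 'r" where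
  "word_eval s w = prod_list (map s w)"

definition satisfies_identity :: "'r::monoid_mult itself \<Rightarrow> nat list \<Rightarrow> nat list \<Rightarrow> bool" where
  "satisfies_identity TYPE('r) u v \<longleftrightarrow> (\<forall>s::nat \<Rightarrow> 'r. word_eval s u = word_eval s v)"

definition reduced_identity :: "nat list \<Rightarrow> nat list \<Rightarrow> bool" where
  "reduced_identity u v \<longleftrightarrow> u \<noteq> [] \<and> v \<noteq> [] \<and> hd u \<noteq> hd v \<and> last u \<noteq> last v"

definition is_algebra :: "('k::comm_ring_1 \<Rightarrow> 'r::ring_1 \<Rightarrow> 'r) \<Rightarrow> bool" where
  "is_algebra sm \<longleftrightarrow>
     (\<forall>k x y. sm k (x + y) = sm k x + sm k y) \<and>
     (\<forall>k l x. sm (k + l) x = sm k x + sm l x) \<and>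
     (\<forall>k l x. sm (k * l) x = sm k (sm l x)) \<and>
     (\<forall>x. sm 1 x = x) \<and>
     (\<forall>k x y. sm k (x * y) = sm k x * y) \<and>
     (\<forall>k x y. sm k (x * y) = x * sm k y)"

definition torsion_free_action :: "('k::comm_ring_1 \<Rightarrow> 'r::ring_1 \<Rightarrow> 'r) \<Rightarrow> bool" where
  "torsion_free_action sm \<longleftrightarrow> (\<forall>k x. k \<noteq> 0 \<longrightarrow> x \<noteq> 0 \<longrightarrow> sm k x \<noteq> 0)"

end

theory Submission
  imports Defs
begin

text \<open>To cancel a leading letter \<open>x\<close> from an identity \<open>x w\<^sub>1 = x w\<^sub>2\<close>, fix a substitution
\<open>s\<close> and substitute \<open>x \<mapsto> \<lambda> + s x\<close> for a scalar \<open>\<lambda>\<close>. Then \<open>D(\<lambda>) = w\<^sub>1 - w\<^sub>2\<close> becomes a polynomial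
in \<open>\<lambda>\<close> with coefficients in \<open>R\<close>, and \<open>(\<lambda> + s x) D(\<lambda>) = 0\<close> for every \<open>\<lambda> \<in> K\<close>. Over an infinite
\<open>K\<close> acting torsion-freely, a polynomial vanishing everywhere has zero coefficients (synthetic
division and induction on the degree). As \<open>\<lambda> + s x\<close> is monic, the coefficients of \<open>D\<close> vanish
too, so \<open>D(0)\<close>, which is \<open>w\<^sub>1 - w\<^sub>2\<close> evaluated at \<open>s\<close>, is zero. Trailing letters are cancelled
in the same way.\<close>

locale algebra_over =
  fixes sm :: "'k::comm_ring_1 \<Rightarrow> 'r::ring_1 \<Rightarrow> 'r"
  assumes is_algebra: "is_algebra sm"
begin

lemma scale_add_right: "sm k (x + y) = sm k x + sm k y"
  using is_algebra unfolding is_algebra_def by blast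

lemma scale_add_left: "sm (k + l) x = sm k x + sm l x"
  using is_algebra unfolding is_algebra_def by blast

lemma scale_scale: "sm k (sm l x) = sm (k * l) x"
  using is_algebra unfolding is_algebra_def by metis

lemma scale_one [simp]: "sm 1 x = x"
  using is_algebra unfolding is_algebra_def by blast

lemma scale_mult_left: "sm k (x * y) = sm k x * y"
  using is_algebra unfolding is_algebra_def by blast

lemma scale_mult_right: "sm k (x * y) = x * sm k y"
  using is_algebra unfolding is_algebra_def by blast

lemma scale_zero_right [simp]: "sm k 0 = 0"
  using scale_add_right[of k 0 0] by simp

lemma scale_zero_left [simp]: "sm 0 x = 0"
  using scale_add_left[of 0 0 x] by simp

lemma scale_minus_right: "sm k (- x) = - sm k x"
  using scale_add_right[of k x "- x"] by (simp add: add.commute eq_neg_iff_add_eq_0)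

lemma scale_one_mult: "sm k 1 * x = sm k x"
  using scale_mult_left[of k 1 x] by simp

lemma mult_scale_one: "x * sm k 1 = sm k x"
  using scale_mult_right[of k x 1] by simp

definition k_linear :: "('r \<Rightarrow> 'r) \<Rightarrow> bool" where
  "k_linear f \<longleftrightarrow> (\<forall>x y. f (x + y) = f x + f y) \<and> (\<forall>k x. f (sm k x) = sm k (f x))"

lemma k_linear_zero:
  assumes "k_linear f"
  shows "f 0 = 0"
proof -
  have "f 0 + f 0 = f 0"
    using assms unfolding k_linear_def by (metis add_0)
  then show ?thesis by simp
qed

lemma k_linear_mult_left: "k_linear ((*) a)"
  by (simp add: k_linear_def distrib_left scale_mult_right)

lemma k_linear_mult_right: "k_linear (\<lambda>x. x * a)"
  by (simp add: k_linear_def distrib_right scale_mult_left)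

lemma k_linear_uminus: "k_linear uminus"
  by (simp add: k_linear_def scale_minus_right)

text \<open>Polynomials in one scalar variable with coefficients in \<open>R\<close> are coefficient lists,
constant term first.\<close>

fun horner :: "'r list \<Rightarrow> 'k \<Rightarrow> 'r" where
  "horner [] l = 0"
| "horner (c # cs) l = c + sm l (horner cs l)"

lemma horner_zero_coeffs: "set cs \<subseteq> {0} \<Longrightarrow> horner cs l = 0"
  by (induction cs) auto

fun padd :: "'r list \<Rightarrow> 'r list \<Rightarrow> 'r list" where
  "padd [] bs = bs"
| "padd as [] = as"
| "padd (a # as) (b # bs) = (a + b) # padd as bs"

lemma horner_padd: "horner (padd as bs) l = horner as l + horner bs l"
  by (induction as bs rule: padd.induct) (simp_all add: scale_add_right algebra_simps)

lemma horner_map: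
  assumes "k_linear f"
  shows "horner (map f cs) l = f (horner cs l)"
proof -
  have "f (x + y) = f x + f y" and "f (sm k x) = sm k (f x)" for x y k
    using assms unfolding k_linear_def by blast+
  with k_linear_zero[OF assms] show ?thesis by (induction cs) simp_all
qed

text \<open>The coefficients of \<open>(\<lambda> + f) p\<close>, that is, of \<open>\<lambda> p(\<lambda>) + f (p(\<lambda>))\<close>.\<close>

definition linear_factor_mult :: "('r \<Rightarrow> 'r) \<Rightarrow> 'r list \<Rightarrow> 'r list" where
  "linear_factor_mult f cs = padd (0 # cs) (map f cs)"

lemma horner_linear_factor_mult:
  assumes "k_linear f"
  shows "horner (linear_factor_mult f cs) l = sm l (horner cs l) + f (horner cs l)"
  by (simp add: linear_factor_mult_def horner_padd horner_map[OF assms])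

lemma padd_map_zero_coeffs:
  assumes "f 0 = 0"
  shows "set (padd (d # cs) (map f cs)) \<subseteq> {0} \<Longrightarrow> d = 0 \<and> set cs \<subseteq> {0}"
proof (induction cs arbitrary: d)
  case Nil
  then show ?case by simp
next
  case (Cons c cs)
  have "set (padd (c # cs) (map f cs)) \<subseteq> {0}"
    using Cons.prems by simp
  then have "c = 0 \<and> set cs \<subseteq> {0}" by (rule Cons.IH)
  with Cons.prems assms show ?case by simp
qed

lemma linear_factor_mult_zero_coeffs:
  assumes "f 0 = 0" and "set (linear_factor_mult f cs) \<subseteq> {0}"
  shows "set cs \<subseteq> {0}"
  using padd_map_zero_coeffs[where f = f and d = 0, OF assms(1)] assms(2)
  unfolding linear_factor_mult_def by blast

text \<open>\<open>horner_tails cs m\<close> is the quotient of \<open>c # cs\<close> by \<open>\<lambda> - m\<close> under synthetic division,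
for any constant term \<open>c\<close>.\<close>

fun horner_tails :: "'r list \<Rightarrow> 'k \<Rightarrow> 'r list" where
  "horner_tails [] m = []"
| "horner_tails (c # cs) m = horner (c # cs) m # horner_tails cs m"

lemma length_horner_tails [simp]: "length (horner_tails cs m) = length cs"
  by (induction cs) auto

lemma horner_Cons_synthetic_division:
  "horner (c # cs) l = horner (c # cs) m + sm (l - m) (horner (horner_tails cs m) l)"
proof (induction cs arbitrary: c)
  case Nil
  then show ?case by simp
next
  case (Cons d ds)
  let ?q = "horner (horner_tails ds m) l"
  have "sm l (horner (d # ds) l) = sm l (horner (d # ds) m) + sm (l - m) (sm l ?q)"
    using Cons.IH by (simp add: scale_add_right scale_scale mult.commute)
  also have "\<dots> = sm m (horner (d # ds) m) + sm (l - m) (horner (d # ds) m + sm l ?q)"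
    using scale_add_left[of m "l - m" "horner (d # ds) m"] by (simp add: scale_add_right)
  finally show ?case by (simp add: add.assoc)
qed

lemma horner_tails_zero_coeffs: "set (horner_tails cs m) \<subseteq> {0} \<Longrightarrow> set cs \<subseteq> {0}"
proof (induction cs)
  case Nil
  then show ?case by simp
next
  case (Cons c cs)
  then have "set cs \<subseteq> {0}" by simp
  moreover have "horner (c # cs) m = 0" using Cons.prems by simp
  ultimately show ?case by (simp add: horner_zero_coeffs)
qed

end

locale torsion_free_algebra_over = algebra_over sm for sm :: "'k::comm_ring_1 \<Rightarrow> 'r::ring_1 \<Rightarrow> 'r" +
  assumes torsion_free: "torsion_free_action sm"
begin

lemma scale_eq_0_iff: "sm k x = 0 \<longleftrightarrow> k = 0 \<or> x = 0"
  using torsion_free unfolding torsion_free_action_def by auto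

lemma horner_vanishing_zero_coeffs:
  assumes "infinite S" and "\<forall>l\<in>S. horner cs l = 0"
  shows "set cs \<subseteq> {0}"
  using assms
proof (induction "length cs" arbitrary: cs S rule: less_induct)
  case less
  show ?case
  proof (cases cs)
    case Nil
    then show ?thesis by simp
  next
    case (Cons c cs')
    obtain m where "m \<in> S" using \<open>infinite S\<close> by (metis finite.emptyI ex_in_conv)
    then have horner_m: "horner cs m = 0" using less.prems by blast
    have "horner (horner_tails cs' m) l = 0" if "l \<in> S - {m}" for l
      using that less.prems horner_m horner_Cons_synthetic_division[of c cs' l m]
      by (simp add: Cons scale_eq_0_iff)
    then have "set (horner_tails cs' m) \<subseteq> {0}"
      using less.hyps[of "horner_tails cs' m" "S - {m}"] less.prems(1) Cons by simp
    then have "set cs' \<subseteq> {0}" by (rule horner_tails_zero_coeffs)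
    moreover from this have "c = 0" using horner_m by (simp add: Cons horner_zero_coeffs)
    ultimately show ?thesis using Cons by simp
  qed
qed

lemma linear_factor_multiple_vanishing_zero_coeffs:
  assumes "infinite S" and "k_linear f"
    and "\<forall>l\<in>S. sm l (horner cs l) + f (horner cs l) = 0"
  shows "set cs \<subseteq> {0}"
proof (rule linear_factor_mult_zero_coeffs)
  show "f 0 = 0" using assms(2) by (rule k_linear_zero)
  show "set (linear_factor_mult f cs) \<subseteq> {0}"
    using horner_vanishing_zero_coeffs[OF assms(1)] assms(3)
    by (simp add: horner_linear_factor_mult[OF assms(2)])
qed

text \<open>The coefficients of \<open>\<lambda> \<mapsto> w\<close> evaluated at \<open>s(x := \<lambda> + s x)\<close>.\<close>

fun word_poly :: "nat \<Rightarrow> (nat \<Rightarrow> 'r) \<Rightarrow> nat list \<Rightarrow> 'r list" where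
  "word_poly x s [] = [1]"
| "word_poly x s (z # w) =
     (if z = x then linear_factor_mult ((*) (s x)) (word_poly x s w)
      else map ((*) (s z)) (word_poly x s w))"

lemma horner_word_poly: "horner (word_poly x s w) l = word_eval (s(x := sm l 1 + s x)) w"
  by (induction w)
    (simp_all add: word_eval_def horner_linear_factor_mult horner_map k_linear_mult_left
      scale_one_mult distrib_right)

lemma word_eval_eq_if_linear_multiple_vanishes:
  fixes s :: "nat \<Rightarrow> 'r" and x :: nat and w\<^sub>1 w\<^sub>2 :: "nat list"
  defines "\<delta> \<equiv> \<lambda>l. word_eval (s(x := sm l 1 + s x)) w\<^sub>1 - word_eval (s(x := sm l 1 + s x)) w\<^sub>2"
  assumes "infinite (UNIV :: 'k set)" and "k_linear f"
    and vanishes: "\<And>l. sm l (\<delta> l) + f (\<delta> l) = 0"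
  shows "word_eval s w\<^sub>1 = word_eval s w\<^sub>2"
proof -
  define D where "D = padd (word_poly x s w\<^sub>1) (map uminus (word_poly x s w\<^sub>2))"
  have horner_D: "horner D l = \<delta> l" for l
    by (simp add: D_def \<delta>_def horner_padd horner_map[OF k_linear_uminus] horner_word_poly)
  have "set D \<subseteq> {0}"
    using linear_factor_multiple_vanishing_zero_coeffs[of UNIV f D] assms(2,3) vanishes
    by (simp add: horner_D)
  then have "\<delta> 0 = 0" using horner_zero_coeffs horner_D by metis
  then show ?thesis by (simp add: \<delta>_def)
qed

lemma cancel_first_letter:
  assumes "infinite (UNIV :: 'k set)"
    and "satisfies_identity TYPE('r) (x # w\<^sub>1) (x # w\<^sub>2)"
  shows "satisfies_identity TYPE('r) w\<^sub>1 w\<^sub>2"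
  unfolding satisfies_identity_def
proof
  fix s :: "nat \<Rightarrow> 'r"
  show "word_eval s w\<^sub>1 = word_eval s w\<^sub>2"
  proof (rule word_eval_eq_if_linear_multiple_vanishes[OF assms(1) k_linear_mult_left])
    fix l
    let ?t = "s(x := sm l 1 + s x)"
    let ?d = "word_eval ?t w\<^sub>1 - word_eval ?t w\<^sub>2"
    have "sm l ?d + s x * ?d = (sm l 1 + s x) * ?d"
      by (simp add: distrib_right scale_one_mult)
    also have "\<dots> = word_eval ?t (x # w\<^sub>1) - word_eval ?t (x # w\<^sub>2)"
      by (simp add: word_eval_def right_diff_distrib)
    also have "\<dots> = 0"
      using assms(2) by (simp add: satisfies_identity_def)
    finally show "sm l ?d + s x * ?d = 0" .
  qed
qed

lemma cancel_last_letter: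
  assumes "infinite (UNIV :: 'k set)"
    and "satisfies_identity TYPE('r) (w\<^sub>1 @ [x]) (w\<^sub>2 @ [x])"
  shows "satisfies_identity TYPE('r) w\<^sub>1 w\<^sub>2"
  unfolding satisfies_identity_def
proof
  fix s :: "nat \<Rightarrow> 'r"
  show "word_eval s w\<^sub>1 = word_eval s w\<^sub>2"
  proof (rule word_eval_eq_if_linear_multiple_vanishes[OF assms(1) k_linear_mult_right])
    fix l
    let ?t = "s(x := sm l 1 + s x)"
    let ?d = "word_eval ?t w\<^sub>1 - word_eval ?t w\<^sub>2"
    have "sm l ?d + ?d * s x = ?d * (sm l 1 + s x)"
      by (simp add: distrib_left mult_scale_one)
    also have "\<dots> = word_eval ?t (w\<^sub>1 @ [x]) - word_eval ?t (w\<^sub>2 @ [x])"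
      by (simp add: word_eval_def left_diff_distrib)
    also have "\<dots> = 0"
      using assms(2) by (simp add: satisfies_identity_def)
    finally show "sm l ?d + ?d * s x = 0" .
  qed
qed

lemma cancel_common_prefix:
  assumes "infinite (UNIV :: 'k set)"
  shows "satisfies_identity TYPE('r) (a @ w\<^sub>1) (a @ w\<^sub>2) \<Longrightarrow> satisfies_identity TYPE('r) w\<^sub>1 w\<^sub>2"
  by (induction a) (simp_all add: cancel_first_letter[OF assms])

lemma cancel_common_suffix:
  assumes "infinite (UNIV :: 'k set)"
  shows "satisfies_identity TYPE('r) (w\<^sub>1 @ b) (w\<^sub>2 @ b) \<Longrightarrow> satisfies_identity TYPE('r) w\<^sub>1 w\<^sub>2"
proof (induction b rule: rev_induct)
  case Nil
  then show ?case by simp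
next
  case (snoc x b)
  then show ?case using cancel_last_letter[OF assms, of "w\<^sub>1 @ b" x "w\<^sub>2 @ b"] by simp
qed

end

theorem proposition1p4:
  fixes sm :: "'k::idom \<Rightarrow> 'r::ring_1 \<Rightarrow> 'r"
    and u v a b u' v' :: "nat list"
  assumes "infinite (UNIV :: 'k set)"
    and "is_algebra sm"
    and "torsion_free_action sm"
    and "u \<noteq> []" and "v \<noteq> []" and "u \<noteq> v"
    and "satisfies_identity TYPE('r) u v"
    and "u = a @ u' @ b" and "v = a @ v' @ b"
    and "reduced_identity u' v'"
  shows "satisfies_identity TYPE('r) u' v'"
proof -
  interpret torsion_free_algebra_over sm
    using assms(2,3) by unfold_locales
  have "satisfies_identity TYPE('r) (a @ u' @ b) (a @ v' @ b)"
    using assms(7-9) by simp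
  then have "satisfies_identity TYPE('r) (u' @ b) (v' @ b)"
    by (rule cancel_common_prefix[OF assms(1)])
  then show ?thesis
    by (rule cancel_common_suffix[OF assms(1)])
qed

end
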